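(* For every integer $k \geq 1$, let $\mathcal{Q}(k)$ denote the greatest common divisor of all the sums $\sum_{i=1}^{k} Q_{n+i}$, $n \geq 0$. Then $$\mathcal{Q}(k) = \begin{cases} 2P_{k/2}, & \text{if } k \equiv 0 \pmod 4;\\ 2Q_{k/2}, & \text{if } k \equiv 2 \pmod 4;\\ 1, & \text{if } k \equiv 1,3 \pmod 4.\end{cases}$$
   Context: The Pell sequence $(P_n)_{n\ge0}$ is defined by $P_0=0$, $P_1=1$, $P_n = 2P_{n-1}+P_{n-2}$. The associated Pell sequence $(Q_n)_{n\ge0}$ is defined by $Q_0=1$, $Q_1=1$, $Q_n=2Q_{n-1}+Q_{n-2}$. *)

theory Defs
  imports Main
begin

fun pell :: "nat \<Rightarrow> nat" where
  "pell 0 = 0"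
| "pell (Suc 0) = 1"
| "pell (Suc (Suc n)) = 2 * pell (Suc n) + pell n"

fun assoc_pell :: "nat \<Rightarrow> nat" where
  "assoc_pell 0 = 1"
| "assoc_pell (Suc 0) = 1"
| "assoc_pell (Suc (Suc n)) = 2 * assoc_pell (Suc n) + assoc_pell n"

definition QQ :: "nat \<Rightarrow> nat" where
  "QQ k = Gcd {(\<Sum>i=1..k. assoc_pell (n + i)) | n. True}"

end

theory Submission
  imports Defs
begin

text \<open>
  The sums telescope, Q_{n+1} + ... + Q_{n+k} = P_{n+k+1} - P_{n+1}, so as functions of n they
  satisfy the Pell recurrence; hence their gcd is the gcd of the first two sums, which is
  gcd (P_{k+1} - 1) P_k. For k = 2j, the doubling formulas P_{2j} = 2 P_j Q_j and, via
  Cassini's identity, P_{2j+1} - 1 = 2 P_j Q_{j+1} (j even) or 2 Q_j P_{j+1} (j odd) reduce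
  this gcd to that of two consecutive terms, which is 1. For odd k, Cassini's identity
  forces every common divisor to divide 2, while P_k is odd.
\<close>

lemma gcd_linear_recurrence_Suc:
  fixes S :: "nat \<Rightarrow> 'a::semiring_gcd"
  assumes rec: "\<And>n. S (Suc (Suc n)) = c * S (Suc n) + S n"
  shows "gcd (S n) (S (Suc n)) = gcd (S 0) (S 1)"
proof (induction n)
  case (Suc n)
  have "gcd (S (Suc n)) (S (Suc (Suc n))) = gcd (S (Suc n)) (S n)"
    by (simp only: rec gcd_add_mult)
  with Suc show ?case
    by (simp add: gcd.commute)
qed simp

lemma Gcd_range_linear_recurrence:
  fixes S :: "nat \<Rightarrow> 'a::semiring_Gcd"
  assumes rec: "\<And>n. S (Suc (Suc n)) = c * S (Suc n) + S n"
  shows "Gcd (range S) = gcd (S 0) (S 1)"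
proof (rule associated_eqI)
  show "Gcd (range S) dvd gcd (S 0) (S 1)"
    by (intro gcd_greatest Gcd_dvd) auto
  have "gcd (S 0) (S 1) dvd S n" for n
    using gcd_linear_recurrence_Suc [of S c n, OF rec] by (metis gcd_dvd1)
  then show "gcd (S 0) (S 1) dvd Gcd (range S)"
    by (auto intro: Gcd_greatest)
qed simp_all

lemma assoc_pell_add_pell: "assoc_pell n + pell n = pell (Suc n)"
  by (induction n rule: pell.induct) auto

lemma assoc_pell_Suc: "assoc_pell (Suc n) = pell (Suc n) + pell n"
  using assoc_pell_add_pell [of "Suc n"] by simp

lemma odd_pell_iff: "odd (pell n) \<longleftrightarrow> odd n"
  by (induction n rule: pell.induct) auto

lemma sum_assoc_pell: "(\<Sum>i=1..k. assoc_pell (n + i)) + pell (Suc n) = pell (Suc (n + k))"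
  by (induction k) (simp_all flip: assoc_pell_add_pell)

lemma pell_add: "pell (Suc (m + n)) = pell (Suc m) * pell (Suc n) + pell m * pell n"
  by (induction n rule: pell.induct) (simp_all add: algebra_simps)

lemma pell_cassini:
  "int (pell (Suc n))^2 - 2 * int (pell n) * int (pell (Suc n)) - int (pell n)^2 = (-1)^n"
  by (induction n) (simp_all add: algebra_simps power2_eq_square)

lemma coprime_pell_Suc: "coprime (pell n) (pell (Suc n))"
  using gcd_linear_recurrence_Suc [of pell 2 n] by (simp add: coprime_iff_gcd_eq_1)

lemma coprime_assoc_pell_Suc: "coprime (assoc_pell n) (assoc_pell (Suc n))"
  using gcd_linear_recurrence_Suc [of assoc_pell 2 n] by (simp add: coprime_iff_gcd_eq_1)

lemma pell_double: "pell (2 * n) = 2 * pell n * assoc_pell n"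
proof (cases n)
  case (Suc m)
  have "pell (2 * n) = pell (Suc (Suc m)) * pell (Suc m) + pell (Suc m) * pell m"
    using pell_add [of "Suc m" m] Suc by (simp add: mult_2)
  then show ?thesis
    using Suc by (simp add: assoc_pell_Suc algebra_simps)
qed simp

lemma pell_double_Suc: "pell (Suc (2 * n)) = pell (Suc n)^2 + pell n^2"
  using pell_add [of n n] by (simp add: mult_2 power2_eq_square)

lemma pell_double_Suc_even:
  assumes "even n"
  shows "pell (Suc (2 * n)) = 2 * pell n * assoc_pell (Suc n) + 1"
proof -
  have cassini: "int (pell (Suc n))^2 - 2 * int (pell n) * int (pell (Suc n)) - int (pell n)^2 = 1"
    using pell_cassini [of n] assms by simp
  have "int (pell (Suc (2 * n))) = int (2 * pell n * assoc_pell (Suc n) + 1)"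
    using cassini unfolding pell_double_Suc assoc_pell_Suc
    by (simp add: algebra_simps power2_eq_square)
  then show ?thesis
    by (simp only: of_nat_eq_iff)
qed

lemma pell_double_Suc_odd:
  assumes "odd n"
  shows "pell (Suc (2 * n)) = 2 * assoc_pell n * pell (Suc n) + 1"
proof -
  have cassini: "int (pell (Suc n))^2 - 2 * int (pell n) * int (pell (Suc n)) - int (pell n)^2 = -1"
    using pell_cassini [of n] assms by simp
  have assoc: "int (assoc_pell n) = int (pell (Suc n)) - int (pell n)"
    using assoc_pell_add_pell [of n] by simp
  have "int (pell (Suc (2 * n))) = int (2 * assoc_pell n * pell (Suc n) + 1)"
    using cassini unfolding pell_double_Suc by (simp add: assoc algebra_simps power2_eq_square)
  then show ?thesis
    by (simp only: of_nat_eq_iff)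
qed

lemma QQ_eq_gcd: "QQ k = gcd (pell (Suc k) - 1) (pell k)"
proof -
  define S where "S n = (\<Sum>i=1..k. assoc_pell (n + i))" for n
  have rec: "S (Suc (Suc n)) = 2 * S (Suc n) + S n" for n
    unfolding S_def by (simp add: sum_distrib_left flip: sum.distrib)
  have S_add_pell: "S n + pell (Suc n) = pell (Suc (n + k))" for n
    unfolding S_def by (rule sum_assoc_pell)
  have S0: "S 0 = pell (Suc k) - 1"
    using S_add_pell [of 0] by simp
  have S1: "S 1 = 2 * S 0 + pell k"
    using S_add_pell [of 0] S_add_pell [of 1] by simp
  have "QQ k = Gcd (range S)"
    unfolding QQ_def S_def by (simp add: full_SetCompr_eq)
  also have "\<dots> = gcd (S 0) (S 1)"
    using Gcd_range_linear_recurrence [of S, OF rec] .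
  also have "\<dots> = gcd (S 0) (pell k)"
    unfolding S1 by (rule gcd_add_mult)
  finally show ?thesis
    unfolding S0 .
qed

lemma gcd_pell_double_even:
  assumes "even n"
  shows "gcd (pell (Suc (2 * n)) - 1) (pell (2 * n)) = 2 * pell n"
proof -
  have "gcd (pell (Suc (2 * n)) - 1) (pell (2 * n))
      = 2 * pell n * gcd (assoc_pell (Suc n)) (assoc_pell n)"
    unfolding pell_double_Suc_even [OF assms] pell_double by (simp add: gcd_mult_distrib_nat)
  then show ?thesis
    using coprime_assoc_pell_Suc [of n] by (simp add: gcd.commute coprime_iff_gcd_eq_1)
qed

lemma gcd_pell_double_odd:
  assumes "odd n"
  shows "gcd (pell (Suc (2 * n)) - 1) (pell (2 * n)) = 2 * assoc_pell n"
proof -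
  have "gcd (pell (Suc (2 * n)) - 1) (pell (2 * n))
      = 2 * assoc_pell n * gcd (pell (Suc n)) (pell n)"
    unfolding pell_double_Suc_odd [OF assms] pell_double
    by (simp add: gcd_mult_distrib_nat ac_simps)
  then show ?thesis
    using coprime_pell_Suc [of n] by (simp add: gcd.commute coprime_iff_gcd_eq_1)
qed

lemma coprime_pell_Suc_pred:
  assumes "odd k"
  shows "coprime (pell (Suc k) - 1) (pell k)"
proof (rule coprimeI)
  fix d
  assume d_dvd: "d dvd pell (Suc k) - 1" "d dvd pell k"
  obtain j where k: "k = Suc j" and "even j"
    using assms by (auto elim: oddE)
  define x y where "x = int (pell k)" and "y = int (pell j)"
  have "odd (pell k)"
    using assms odd_pell_iff by blast
  then have "pell k > 0"
    by (rule odd_pos)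
  then have "int (pell (Suc k) - 1) = 2 * x + y - 1"
    unfolding x_def y_def k by (simp add: of_nat_diff)
  then have dvd_S: "int d dvd 2 * x + y - 1"
    using d_dvd(1) by (metis int_dvd_int_iff)
  have dvd_x: "int d dvd x"
    using d_dvd(2) unfolding x_def by simp
  have dvd_y: "int d dvd y - 1"
    using dvd_diff [OF dvd_S dvd_mult [OF dvd_x, of 2]] by simp
  have "x^2 - 2 * y * x - y^2 = 1"
    using pell_cassini [of j] \<open>even j\<close> unfolding x_def y_def k by simp
  \<comment> \<open>Modulo d we have x = 0 and y = 1, so Cassini's identity degenerates to -1 = 1.\<close>
  then have "2 = x * (x - 2 * y) - (y - 1) * (y + 1)"
    by (simp add: algebra_simps power2_eq_square)
  also have "int d dvd \<dots>"
    using dvd_x dvd_y by (simp add: dvd_diff)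
  finally have "d dvd 2"
    by (metis of_nat_dvd_iff of_nat_numeral)
  then have "d \<le> 2"
    by (rule dvd_imp_le) simp
  moreover have "odd d"
    using \<open>odd (pell k)\<close> d_dvd(2) dvd_trans by blast
  ultimately have "d = 1"
    by presburger
  then show "is_unit d"
    by simp
qed

theorem theorem16:
  fixes k :: nat
  assumes "k \<ge> 1"
  shows "QQ k = (if k mod 4 = 0 then 2 * pell (k div 2)
                 else if k mod 4 = 2 then 2 * assoc_pell (k div 2)
                 else 1)"
proof (cases "even k")
  case True
  then have k: "k = 2 * (k div 2)"
    by simp
  have "QQ k = gcd (pell (Suc (2 * (k div 2))) - 1) (pell (2 * (k div 2)))"
    using QQ_eq_gcd [of k] k by simp
  moreover have "even (k div 2) \<longleftrightarrow> k mod 4 = 0" and "odd (k div 2) \<longleftrightarrow> k mod 4 = 2"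
    using True by presburger+
  ultimately show ?thesis
    using gcd_pell_double_even gcd_pell_double_odd by auto
next
  case False
  then have "k mod 4 \<noteq> 0" and "k mod 4 \<noteq> 2"
    by presburger+
  with False show ?thesis
    using QQ_eq_gcd coprime_pell_Suc_pred by (simp add: coprime_iff_gcd_eq_1)
qed

end
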